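(* Let $\epsilon>0$, $R\in\mathbb{R}$, and let $s_R\ge0$ and $m_R<\beta$ be constants such that every $\varphi\in\Theta$ with $L(\varphi)\ge R$ satisfies $|\varphi(0)|\le s_R$ and $\sup_x\varphi'(x+)\le m_R$. Suppose $\theta\in\Theta$ and $\tau\in\mathbb{R}_{\ge0}$ satisfy $DL(\theta,V_\tau)>\epsilon$ and $R\le L(\theta)$. Let $g:\mathbb{R}_{\ge0}\to[-\infty,\infty)$ be $g(t):=L(\theta+tV_\tau)-L(\theta)$. Then for $t$ in the set $\{t: g(t)\ge0\}$, the magnitude $|g''(t)|$ of the second derivative of $g$ is bounded above by a finite constant depending only on $s_R$ and $m_R$ (given the fixed density $f$ and data $x_1,\dots,x_n$).
   Context: Let $f$ be a probability density on $\mathbb{R}_{\ge0}$ satisfying the standing assumptions: (A1) $f$ is continuous and $f(x)>0$ for all $x>0$; (A2) there is $\beta\in\mathbb{R}$ such that for every $\lambda\in\mathbb{R}$, $\int_0^\infty e^{\lambda x}f(x)\,dx<\infty$ if and only if $\lambda<\beta$, and $\lim_{\lambda\to\beta^-}\int_0^\infty e^{\lambda x}f(x)\,dx=\infty$; (A3) for every $\lambda\in\mathbb{R}$, $\int_0^\infty e^{\lambda x}f(x)dx<\infty$ implies $\int_0^\infty x^2e^{\lambda x}f(x)dx<\infty$. Let $M$ be the measure on $\mathbb{R}_{\ge0}$ with density $f$. Fix data $x_1\le\dots\le x_n$ in $\mathbb{R}_{\ge0}$ with empirical distribution $\hat P=\frac1n\sum_{i=1}^n\delta_{x_i}$. $\Theta$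 is the set of convex non-decreasing functions $\theta:\mathbb{R}_{\ge0}\to\mathbb{R}$. For $\theta\in\Theta$, $L(\theta):=\int\theta\,d\hat P-\int e^{\theta}\,dM+1\in[-\infty,\infty)$. For $\theta\in\Theta$ and a function $v$, $DL(\theta,v):=\lim_{t\to0^+}\frac{L(\theta+tv)-L(\theta)}{t}$. For $\tau\ge0$, $V_\tau(x):=(x-\tau)^+$. *)

theory Defs
  imports "HOL-Analysis.Analysis"
begin

definition Mf :: "(real \<Rightarrow> real) \<Rightarrow> real measure" where
  "Mf f = density (restrict_space lborel {0..}) (\<lambda>x. ennreal (f x))"

text \<open>Theta: convex non-decreasing functions on the nonnegative reals
  (values outside [0,oo) are irrelevant).\<close>
definition Theta :: "(real \<Rightarrow> real) set" where
  "Theta = {\<theta>. convex_on {0..} \<theta> \<and> mono_on {0..} \<theta>}"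

definition Lfun :: "(real \<Rightarrow> real) \<Rightarrow> real list \<Rightarrow> (real \<Rightarrow> real) \<Rightarrow> ereal" where
  "Lfun f xs \<theta> =
     ereal ((\<Sum>x\<leftarrow>xs. \<theta> x) / real (length xs))
     - enn2ereal (\<integral>\<^sup>+ x. ennreal (exp (\<theta> x)) \<partial>(Mf f)) + 1"

definition has_DL :: "(real \<Rightarrow> real) \<Rightarrow> real list \<Rightarrow> (real \<Rightarrow> real) \<Rightarrow> (real \<Rightarrow> real) \<Rightarrow> ereal \<Rightarrow> bool" where
  "has_DL f xs \<theta> v D \<longleftrightarrow>
     ((\<lambda>t. (Lfun f xs (\<lambda>x. \<theta> x + t * v x) - Lfun f xs \<theta>) / ereal t) \<longlongrightarrow> D) (at_right 0)"

definition V :: "real \<Rightarrow> real \<Rightarrow> real" where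
  "V \<tau> x = max (x - \<tau>) 0"

definition right_deriv :: "(real \<Rightarrow> real) \<Rightarrow> real \<Rightarrow> real" where
  "right_deriv \<phi> x = Lim (at_right x) (\<lambda>y. (\<phi> y - \<phi> x) / (y - x))"

end

theory Submission
  imports Defs
begin

text \<open>Along the ray \<open>r \<mapsto> \<theta> + r V\<^sub>\<tau>\<close> the objective is
  \<open>g(r) = r \<cdot> mean(V\<^sub>\<tau>) - \<integral> exp (\<theta> + r V\<^sub>\<tau>) dM + const\<close>, so differentiating twice under
  the integral sign gives \<open>g''(t) = - \<integral> V\<^sub>\<tau>\<^sup>2 exp (\<theta> + t V\<^sub>\<tau>) dM\<close>.
  If \<open>g(t) \<ge> 0\<close>, then \<open>\<phi> = \<theta> + t V\<^sub>\<tau>\<close> lies in \<open>\<Theta>\<close> with \<open>L(\<phi>) \<ge> L(\<theta>) \<ge> R\<close>, so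
  \<open>\<phi>(0) \<le> s\<close> and \<open>\<phi>' \<le> m\<close>, and convexity gives \<open>\<phi>(y) \<le> s + m y\<close>. Since \<open>V\<^sub>\<tau>(y) \<le> y\<close>,
  near \<open>t\<close> the exponent stays below \<open>s + b y\<close> for any \<open>b \<in> (m, \<beta>)\<close>; this domination justifies
  the differentiation and bounds \<open>|g''(t)|\<close> by \<open>exp s \<cdot> \<integral> y\<^sup>2 exp (b y) dM\<close>, which is finite by (A2).\<close>

lemma abs_exp_minus_one_minus_le:
  fixes z :: real
  shows "\<bar>exp z - 1 - z\<bar> \<le> z\<^sup>2 * exp \<bar>z\<bar>"
  using Taylor_exp_field[of z 1] by (simp add: power2_eq_square mult_ac diff_diff_eq)

lemma abs_exp_tilt_remainder_le:
  fixes w u h \<eta> y :: real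
  assumes "0 \<le> y" "\<bar>h\<bar> \<le> \<eta>"
  shows "\<bar>w * exp ((u + h) * y) - w * exp (u * y) - h * (w * y * exp (u * y))\<bar>
           \<le> h\<^sup>2 * (\<bar>w\<bar> * y\<^sup>2 * exp ((u + \<eta>) * y))"
proof -
  have "\<bar>h * y\<bar> \<le> \<eta> * y"
    using assms by (simp add: abs_mult mult_right_mono)
  then have "(h * y)\<^sup>2 * exp \<bar>h * y\<bar> \<le> (h * y)\<^sup>2 * exp (\<eta> * y)"
    by (intro mult_left_mono) auto
  then have taylor: "\<bar>exp (h * y) - 1 - h * y\<bar> \<le> (h * y)\<^sup>2 * exp (\<eta> * y)"
    using abs_exp_minus_one_minus_le[of "h * y"] by linarith
  have "w * exp ((u + h) * y) - w * exp (u * y) - h * (w * y * exp (u * y))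
      = w * exp (u * y) * (exp (h * y) - 1 - h * y)"
    by (simp add: distrib_right exp_add algebra_simps)
  then have "\<bar>w * exp ((u + h) * y) - w * exp (u * y) - h * (w * y * exp (u * y))\<bar>
      = \<bar>w\<bar> * exp (u * y) * \<bar>exp (h * y) - 1 - h * y\<bar>"
    by (simp add: abs_mult)
  also have "\<dots> \<le> \<bar>w\<bar> * exp (u * y) * ((h * y)\<^sup>2 * exp (\<eta> * y))"
    using taylor by (intro mult_left_mono) auto
  also have "\<dots> = h\<^sup>2 * (\<bar>w\<bar> * y\<^sup>2 * (exp (u * y) * exp (\<eta> * y)))"
    by (simp add: power_mult_distrib mult_ac)
  also have "exp (u * y) * exp (\<eta> * y) = exp ((u + \<eta>) * y)"
    by (simp add: distrib_right exp_add)
  finally show ?thesis .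
qed

lemma power_div_fact_le_exp:
  fixes x :: real
  assumes "0 \<le> x"
  shows "x ^ k / fact k \<le> exp x"
proof -
  have "(\<Sum>n\<in>{k}. x ^ n /\<^sub>R fact n) \<le> (\<Sum>n. x ^ n /\<^sub>R fact n)"
    using assms by (intro sum_le_suminf summable_exp_generic) auto
  then show ?thesis by (simp add: exp_def divide_inverse_commute)
qed

lemma has_real_derivative_quadratic_remainder:
  fixes F :: "real \<Rightarrow> real"
  assumes "0 < \<eta>"
    and remainder: "\<And>h. h \<noteq> 0 \<Longrightarrow> \<bar>h\<bar> < \<eta> \<Longrightarrow> \<bar>F (u + h) - F u - h * D\<bar> \<le> K * h\<^sup>2"
  shows "(F has_real_derivative D) (at u)"
proof -
  have "norm ((F (u + h) - F u) / h - D) \<le> K * \<bar>h\<bar>" if "h \<noteq> 0" "\<bar>h\<bar> < \<eta>" for h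
  proof -
    have "(F (u + h) - F u) / h - D = (F (u + h) - F u - h * D) / h"
      using that by (simp add: field_simps)
    then have "norm ((F (u + h) - F u) / h - D) = \<bar>F (u + h) - F u - h * D\<bar> / \<bar>h\<bar>"
      by simp
    also have "\<dots> \<le> K * h\<^sup>2 / \<bar>h\<bar>"
      using remainder[OF that] by (intro divide_right_mono) auto
    also have "\<dots> = K * \<bar>h\<bar>"
      using that by (cases "h > 0") (auto simp: power2_eq_square)
    finally show ?thesis .
  qed
  then have "\<forall>\<^sub>F h in at 0. norm ((F (u + h) - F u) / h - D) \<le> K * \<bar>h\<bar>"
    unfolding eventually_at using \<open>0 < \<eta>\<close> by (auto simp: dist_real_def intro!: exI[of _ \<eta>])
  moreover have "((\<lambda>h. K * \<bar>h\<bar>) \<longlongrightarrow> 0) (at (0::real))"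
    by (rule tendsto_eq_intros refl | simp)+
  ultimately have "((\<lambda>h. (F (u + h) - F u) / h - D) \<longlongrightarrow> 0) (at 0)"
    by (rule Lim_null_comparison)
  then show ?thesis
    by (simp add: DERIV_def LIM_zero_iff)
qed

lemma has_real_derivative_integral_mult_exp:
  fixes M :: "'a measure" and w v :: "'a \<Rightarrow> real"
  assumes "c < u" "u < d"
    and v_nonneg: "\<And>x. x \<in> space M \<Longrightarrow> 0 \<le> v x"
    and int0: "\<And>r. c < r \<Longrightarrow> r < d \<Longrightarrow> integrable M (\<lambda>x. w x * exp (r * v x))"
    and int1: "integrable M (\<lambda>x. w x * v x * exp (u * v x))"
    and int2: "\<And>r. c < r \<Longrightarrow> r < d \<Longrightarrow> integrable M (\<lambda>x. \<bar>w x\<bar> * (v x)\<^sup>2 * exp (r * v x))"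
  shows "((\<lambda>r. \<integral>x. w x * exp (r * v x) \<partial>M) has_real_derivative
           (\<integral>x. w x * v x * exp (u * v x) \<partial>M)) (at u)"
proof -
  define \<eta> where "\<eta> = min (u - c) (d - u) / 2"
  have \<eta>: "0 < \<eta>" "c < u - \<eta>" "u + \<eta> < d"
    using assms(1,2) by (auto simp: \<eta>_def min_def field_simps)
  define K where "K = (\<integral>x. \<bar>w x\<bar> * (v x)\<^sup>2 * exp ((u + \<eta>) * v x) \<partial>M)"
  show ?thesis
  proof (rule has_real_derivative_quadratic_remainder[OF \<eta>(1), where K = K])
    fix h :: real
    assume h: "h \<noteq> 0" "\<bar>h\<bar> < \<eta>"
    define G where "G x = w x * exp ((u + h) * v x) - w x * exp (u * v x) - h * (w x * v x * exp (u * v x))" for x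
    have int_h: "integrable M (\<lambda>x. w x * exp ((u + h) * v x))"
      using h \<eta> by (intro int0) (auto simp: abs_less_iff)
    have int_u: "integrable M (\<lambda>x. w x * exp (u * v x))"
      using assms(1,2) by (intro int0)
    have int_K: "integrable M (\<lambda>x. \<bar>w x\<bar> * (v x)\<^sup>2 * exp ((u + \<eta>) * v x))"
      using \<eta> by (intro int2) auto
    have "(\<integral>x. w x * exp ((u + h) * v x) \<partial>M) - (\<integral>x. w x * exp (u * v x) \<partial>M)
        - h * (\<integral>x. w x * v x * exp (u * v x) \<partial>M) = (\<integral>x. G x \<partial>M)"
      unfolding G_def using int_h int_u int1 by simp
    also have "\<bar>\<dots>\<bar> \<le> (\<integral>x. \<bar>G x\<bar> \<partial>M)"
      by (rule integral_abs_bound)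
    also have "\<dots> \<le> (\<integral>x. h\<^sup>2 * (\<bar>w x\<bar> * (v x)\<^sup>2 * exp ((u + \<eta>) * v x)) \<partial>M)"
    proof (rule integral_mono)
      show "integrable M (\<lambda>x. \<bar>G x\<bar>)"
        unfolding G_def using int_h int_u int1 by simp
      show "\<bar>G x\<bar> \<le> h\<^sup>2 * (\<bar>w x\<bar> * (v x)\<^sup>2 * exp ((u + \<eta>) * v x))" if "x \<in> space M" for x
        unfolding G_def using v_nonneg[OF that] h by (intro abs_exp_tilt_remainder_le) auto
    qed (use int_K in simp)
    also have "\<dots> = K * h\<^sup>2"
      by (simp add: K_def)
    finally show "\<bar>(\<integral>x. w x * exp ((u + h) * v x) \<partial>M) - (\<integral>x. w x * exp (u * v x) \<partial>M)
        - h * (\<integral>x. w x * v x * exp (u * v x) \<partial>M)\<bar> \<le> K * h\<^sup>2" .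
  qed
qed

lemma convex_on_max:
  fixes f g :: "'a::real_vector \<Rightarrow> real"
  assumes "convex_on S f" "convex_on S g"
  shows "convex_on S (\<lambda>x. max (f x) (g x))"
proof (rule convex_onI)
  fix t :: real and x y assume t: "0 < t" "t < 1" and xy: "x \<in> S" "y \<in> S"
  have "f ((1 - t) *\<^sub>R x + t *\<^sub>R y) \<le> (1 - t) * max (f x) (g x) + t * max (f y) (g y)"
    using convex_onD[OF assms(1), of t x y] t xy
    by (smt (verit) max.cobounded1 mult_left_mono)
  moreover have "g ((1 - t) *\<^sub>R x + t *\<^sub>R y) \<le> (1 - t) * max (f x) (g x) + t * max (f y) (g y)"
    using convex_onD[OF assms(2), of t x y] t xy
    by (smt (verit) max.cobounded2 mult_left_mono)
  ultimately show "max (f ((1 - t) *\<^sub>R x + t *\<^sub>R y)) (g ((1 - t) *\<^sub>R x + t *\<^sub>R y))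
      \<le> (1 - t) * max (f x) (g x) + t * max (f y) (g y)" by simp
qed (use assms in \<open>simp add: convex_on_def\<close>)

lemma slope_le_right_deriv:
  fixes \<phi> :: "real \<Rightarrow> real"
  assumes cvx: "convex_on {a..} \<phi>" and "a < y"
  shows "(\<phi> y - \<phi> a) / (y - a) \<le> right_deriv \<phi> y"
proof -
  define q where "q = (\<lambda>z. (\<phi> z - \<phi> y) / (z - y))"
  have q_flip: "(\<phi> y - \<phi> z) / (y - z) = q z" for z
    unfolding q_def by (metis minus_diff_eq minus_divide_divide)
  have q_mono: "q z \<le> q z'" if "y < z" "z \<le> z'" for z z'
  proof (cases "z = z'")
    case False
    then show ?thesis
      using convex_on_slope_le(1)[OF cvx, of y z' z] that \<open>a < y\<close> by (simp add: q_flip)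
  qed simp
  have q_lower: "(\<phi> y - \<phi> a) / (y - a) \<le> q z" if "y < z" for z
  proof -
    have "(\<phi> a - \<phi> y) / (a - y) \<le> (\<phi> a - \<phi> z) / (a - z)"
      using convex_on_slope_le(1)[OF cvx, of a z y] that \<open>a < y\<close> by simp
    also have "\<dots> \<le> q z"
      using convex_on_slope_le(2)[OF cvx, of a z y] that \<open>a < y\<close> by (simp add: q_flip)
    finally show ?thesis by (metis minus_diff_eq minus_divide_divide)
  qed
  have lim: "(q \<longlongrightarrow> Inf (q ` {y<..})) (at_right y)"
    using Lim_right_bound[of UNIV y q "(\<phi> y - \<phi> a) / (y - a)"] q_mono q_lower by simp
  moreover have "\<forall>\<^sub>F z in at_right y. (\<phi> y - \<phi> a) / (y - a) \<le> q z"
    by (rule eventually_mono[OF eventually_at_right_less]) (rule q_lower)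
  ultimately have "(\<phi> y - \<phi> a) / (y - a) \<le> Inf (q ` {y<..})"
    by (intro tendsto_lowerbound) auto
  also have "Inf (q ` {y<..}) = right_deriv \<phi> y"
    using tendsto_Lim[OF trivial_limit_at_right_real lim] by (simp add: right_deriv_def q_def)
  finally show ?thesis .
qed

lemma convex_le_affine_of_right_deriv_le:
  fixes \<phi> :: "real \<Rightarrow> real"
  assumes "convex_on {0..} \<phi>" "\<phi> 0 \<le> s" "\<And>x. 0 \<le> x \<Longrightarrow> right_deriv \<phi> x \<le> m" "0 \<le> y"
  shows "\<phi> y \<le> s + m * y"
proof (cases "y = 0")
  case False
  with assms have "(\<phi> y - \<phi> 0) / y \<le> m"
    using slope_le_right_deriv[OF assms(1), of y] by fastforce
  with False assms show ?thesis by (simp add: divide_le_eq split: if_splits)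
qed (use assms in simp)

lemma V_nonneg: "0 \<le> V \<tau> x"
  by (simp add: V_def)

lemma V_le_self: "0 \<le> \<tau> \<Longrightarrow> 0 \<le> x \<Longrightarrow> V \<tau> x \<le> x"
  by (simp add: V_def)

lemma Theta_add_V:
  assumes "\<theta> \<in> Theta" "0 \<le> t"
  shows "(\<lambda>x. \<theta> x + t * V \<tau> x) \<in> Theta"
proof -
  have "convex_on {0..} (V \<tau>)"
    unfolding V_def[abs_def]
    by (intro convex_on_max convex_on_diff) (simp_all add: convex_on_ident concave_on_const convex_on_const)
  moreover have "mono_on {0..} (V \<tau>)"
    by (auto simp: mono_on_def V_def)
  ultimately show ?thesis
    using assms unfolding Theta_def mono_on_def
    by (intro CollectI conjI convex_on_add convex_on_cmul allI impI add_mono mult_left_mono) auto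
qed

lemma space_Mf [simp]: "space (Mf f) = {0..}"
  by (simp add: Mf_def)

lemma borel_measurable_Mf: "h \<in> borel_measurable borel \<Longrightarrow> h \<in> borel_measurable (Mf f)"
  by (simp add: Mf_def measurable_restrict_space1)

lemma mono_on_borel_measurable_Mf:
  fixes h :: "real \<Rightarrow> real"
  assumes "mono_on {0..} h"
  shows "h \<in> borel_measurable (Mf f)"
proof -
  have "sets (Mf f) = sets (restrict_space borel {0..})"
    unfolding Mf_def sets_density by (rule sets_restrict_space_cong) (rule sets_lborel)
  then have "borel_measurable (Mf f) = borel_measurable (restrict_space borel {0..})"
    by (rule measurable_cong_sets) simp
  then show ?thesis
    using borel_measurable_mono_on_fnc[OF assms] by blast
qed

lemma integrable_Mf_power_exp:
  assumes fin: "\<forall>l<\<beta>. (\<integral>\<^sup>+x. ennreal (exp (l * x)) \<partial>Mf f) < \<infinity>" and "a < \<beta>"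
  shows "integrable (Mf f) (\<lambda>x. x ^ k * exp (a * x))"
proof -
  define \<delta> where "\<delta> = (\<beta> - a) / 2"
  have \<delta>: "0 < \<delta>" "a + \<delta> < \<beta>"
    using \<open>a < \<beta>\<close> by (simp_all add: \<delta>_def field_simps)
  have "integrable (Mf f) (\<lambda>x. exp ((a + \<delta>) * x))"
    using fin \<delta>(2) by (intro integrableI_bounded borel_measurable_Mf) auto
  then have dominant: "integrable (Mf f) (\<lambda>x. fact k / \<delta> ^ k * exp ((a + \<delta>) * x))"
    by simp
  have bound: "\<bar>x ^ k * exp (a * x)\<bar> \<le> fact k / \<delta> ^ k * exp ((a + \<delta>) * x)" if "0 \<le> x" for x
  proof -
    have "(\<delta> * x) ^ k / fact k \<le> exp (\<delta> * x)"
      using \<delta> that by (intro power_div_fact_le_exp) simp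
    then have "x ^ k \<le> fact k / \<delta> ^ k * exp (\<delta> * x)"
      using \<delta> by (simp add: field_simps power_mult_distrib)
    then have "x ^ k * exp (a * x) \<le> fact k / \<delta> ^ k * exp (\<delta> * x) * exp (a * x)"
      by (rule mult_right_mono) simp
    also have "\<dots> = fact k / \<delta> ^ k * exp ((a + \<delta>) * x)"
      by (simp add: distrib_left exp_add mult_ac)
    finally show ?thesis
      using that by simp
  qed
  show ?thesis
  proof (rule Bochner_Integration.integrable_bound[OF dominant])
    show "(\<lambda>x. x ^ k * exp (a * x)) \<in> borel_measurable (Mf f)"
      by (rule borel_measurable_Mf) measurable
    show "AE x in Mf f. norm (x ^ k * exp (a * x)) \<le> norm (fact k / \<delta> ^ k * exp ((a + \<delta>) * x))"
      using bound \<delta>(1) by (intro AE_I2) simp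
  qed
qed

lemma Lfun_eq_integral:
  assumes "integrable (Mf f) (\<lambda>x. exp (\<phi> x))"
  shows "Lfun f xs \<phi> = ereal ((\<Sum>x\<leftarrow>xs. \<phi> x) / real (length xs) - (\<integral>x. exp (\<phi> x) \<partial>Mf f) + 1)"
proof -
  have "(\<integral>\<^sup>+x. ennreal (exp (\<phi> x)) \<partial>Mf f) = ennreal (\<integral>x. exp (\<phi> x) \<partial>Mf f)"
    using assms by (intro nn_integral_eq_integral) auto
  then show ?thesis
    unfolding Lfun_def by simp
qed

lemma Lfun_not_PInf: "Lfun f xs \<phi> \<noteq> \<infinity>"
  unfolding Lfun_def by (cases "enn2ereal (\<integral>\<^sup>+ x. ennreal (exp (\<phi> x)) \<partial>Mf f)") auto

lemma Lfun_ge_of_diff_nonneg: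
  assumes "ereal R \<le> Lfun f xs \<theta>" "0 \<le> Lfun f xs \<phi> - Lfun f xs \<theta>"
  shows "ereal R \<le> Lfun f xs \<phi>"
proof -
  have "Lfun f xs \<theta> \<le> Lfun f xs \<phi>"
    using assms Lfun_not_PInf[of f xs \<theta>] by (cases "Lfun f xs \<theta>") (auto simp: ereal_le_minus_iff)
  with assms(1) show ?thesis
    by (rule order_trans)
qed

locale exp_dominated_ray =
  fixes f :: "real \<Rightarrow> real" and \<beta> b d s :: real and \<theta> v :: "real \<Rightarrow> real"
  assumes exp_integral_finite: "\<forall>l<\<beta>. (\<integral>\<^sup>+x. ennreal (exp (l * x)) \<partial>Mf f) < \<infinity>"
    and b_less: "b < \<beta>"
    and \<theta>_measurable: "\<theta> \<in> borel_measurable (Mf f)"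
    and v_measurable: "v \<in> borel_measurable (Mf f)"
    and v_nonneg: "\<And>y. 0 \<le> y \<Longrightarrow> 0 \<le> v y"
    and v_le: "\<And>y. 0 \<le> y \<Longrightarrow> v y \<le> y"
    and ray_le_affine: "\<And>y r. 0 \<le> y \<Longrightarrow> r < d \<Longrightarrow> \<theta> y + r * v y \<le> s + b * y"
begin

definition moment :: "nat \<Rightarrow> real \<Rightarrow> real" where
  "moment k r = (\<integral>y. exp (\<theta> y) * v y ^ k * exp (r * v y) \<partial>Mf f)"

lemma moment_integrand_le:
  assumes "0 \<le> y" "r < d"
  shows "exp (\<theta> y) * v y ^ k * exp (r * v y) \<le> exp s * (y ^ k * exp (b * y))"
proof -
  have "exp (\<theta> y) * v y ^ k * exp (r * v y) = v y ^ k * exp (\<theta> y + r * v y)"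
    by (simp add: exp_add)
  also have "\<dots> \<le> y ^ k * exp (s + b * y)"
    using assms v_nonneg v_le ray_le_affine by (intro mult_mono power_mono) auto
  also have "\<dots> = exp s * (y ^ k * exp (b * y))"
    by (simp add: exp_add)
  finally show ?thesis .
qed

lemma integrable_moment:
  assumes "r < d"
  shows "integrable (Mf f) (\<lambda>y. exp (\<theta> y) * v y ^ k * exp (r * v y))"
proof (rule Bochner_Integration.integrable_bound)
  show "integrable (Mf f) (\<lambda>y. exp s * (y ^ k * exp (b * y)))"
    using integrable_Mf_power_exp[OF exp_integral_finite b_less] by simp
  show "(\<lambda>y. exp (\<theta> y) * v y ^ k * exp (r * v y)) \<in> borel_measurable (Mf f)"
    using \<theta>_measurable v_measurable by measurable
  show "AE y in Mf f. norm (exp (\<theta> y) * v y ^ k * exp (r * v y)) \<le> norm (exp s * (y ^ k * exp (b * y)))"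
    using moment_integrand_le[OF _ assms] v_nonneg by (intro AE_I2) simp
qed

lemma integrable_moment_cong:
  assumes "r < d" "\<And>y. 0 \<le> y \<Longrightarrow> h y = exp (\<theta> y) * v y ^ k * exp (r * v y)"
  shows "integrable (Mf f) h"
proof -
  have "integrable (Mf f) h \<longleftrightarrow> integrable (Mf f) (\<lambda>y. exp (\<theta> y) * v y ^ k * exp (r * v y))"
    using assms(2) by (intro Bochner_Integration.integrable_cong) auto
  then show ?thesis
    using integrable_moment[OF assms(1)] by blast
qed

lemma moment_nonneg: "0 \<le> moment k r"
  unfolding moment_def by (rule Bochner_Integration.integral_nonneg) (simp add: v_nonneg)

lemma moment_le:
  assumes "r < d"
  shows "moment k r \<le> exp s * (\<integral>y. y ^ k * exp (b * y) \<partial>Mf f)"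
proof -
  have "moment k r \<le> (\<integral>y. exp s * (y ^ k * exp (b * y)) \<partial>Mf f)"
    unfolding moment_def
  proof (rule integral_mono)
    show "integrable (Mf f) (\<lambda>y. exp s * (y ^ k * exp (b * y)))"
      using integrable_Mf_power_exp[OF exp_integral_finite b_less] by simp
  qed (use integrable_moment[OF assms] moment_integrand_le[OF _ assms] in simp_all)
  then show ?thesis
    by simp
qed

lemma has_real_derivative_moment:
  assumes "u < d"
  shows "(moment k has_real_derivative moment (Suc k) u) (at u)"
proof -
  have "((\<lambda>r. \<integral>y. (exp (\<theta> y) * v y ^ k) * exp (r * v y) \<partial>Mf f) has_real_derivative
      (\<integral>y. (exp (\<theta> y) * v y ^ k) * v y * exp (u * v y) \<partial>Mf f)) (at u)"
  proof (rule has_real_derivative_integral_mult_exp[of "u - 1"])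
    show "integrable (Mf f) (\<lambda>y. exp (\<theta> y) * v y ^ k * exp (r * v y))" if "r < d" for r
      using integrable_moment[OF that] .
    show "integrable (Mf f) (\<lambda>y. exp (\<theta> y) * v y ^ k * v y * exp (u * v y))"
      using assms by (rule integrable_moment_cong[where k = "Suc k"]) (simp add: mult_ac)
    show "integrable (Mf f) (\<lambda>y. \<bar>exp (\<theta> y) * v y ^ k\<bar> * (v y)\<^sup>2 * exp (r * v y))" if "r < d" for r
      using that by (rule integrable_moment_cong[where k = "k + 2"])
        (simp add: v_nonneg power_add power2_eq_square mult_ac)
  qed (use assms v_nonneg in simp_all)
  moreover have "moment k = (\<lambda>r. \<integral>y. (exp (\<theta> y) * v y ^ k) * exp (r * v y) \<partial>Mf f)"
    by (simp add: fun_eq_iff moment_def)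
  moreover have "moment (Suc k) u = (\<integral>y. (exp (\<theta> y) * v y ^ k) * v y * exp (u * v y) \<partial>Mf f)"
    by (simp add: moment_def mult_ac)
  ultimately show ?thesis
    by simp
qed

lemma Lfun_ray:
  assumes "r < d"
  shows "Lfun f xs (\<lambda>x. \<theta> x + r * v x) = ereal ((\<Sum>x\<leftarrow>xs. \<theta> x) / real (length xs)
           + r * ((\<Sum>x\<leftarrow>xs. v x) / real (length xs)) - moment 0 r + 1)"
proof -
  have "integrable (Mf f) (\<lambda>x. exp (\<theta> x + r * v x))"
    using assms by (rule integrable_moment_cong[where k = 0]) (simp add: exp_add)
  then show ?thesis
    by (simp add: Lfun_eq_integral moment_def exp_add sum_list_addf sum_list_const_mult add_divide_distrib)
qed

lemma ray_second_derivative_bounded: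
  assumes "0 < d" "t < d"
  shows "\<exists>\<delta>>0. \<exists>g1 g2.
           (\<forall>u\<ge>0. \<bar>u - t\<bar> < \<delta> \<longrightarrow>
              Lfun f xs (\<lambda>x. \<theta> x + u * v x) - Lfun f xs \<theta> \<noteq> -\<infinity> \<and>
              ((\<lambda>r. real_of_ereal (Lfun f xs (\<lambda>x. \<theta> x + r * v x) - Lfun f xs \<theta>))
                 has_real_derivative g1 u) (at u within {0..})) \<and>
           (g1 has_real_derivative g2) (at t within {0..}) \<and>
           \<bar>g2\<bar> \<le> exp s * (\<integral>y. y\<^sup>2 * exp (b * y) \<partial>Mf f)"
proof -
  define A where "A = (\<Sum>x\<leftarrow>xs. v x) / real (length xs)"
  have g_eq: "Lfun f xs (\<lambda>x. \<theta> x + r * v x) - Lfun f xs \<theta> = ereal (r * A - moment 0 r + moment 0 0)"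
    if "r < d" for r
    using Lfun_ray[OF that] Lfun_ray[OF assms(1)] by (simp add: A_def)
  have g_deriv: "((\<lambda>r. real_of_ereal (Lfun f xs (\<lambda>x. \<theta> x + r * v x) - Lfun f xs \<theta>))
                   has_real_derivative A - moment 1 u) (at u)" if "u < d" for u
  proof -
    have "((\<lambda>r. r * A - moment 0 r + moment 0 0) has_real_derivative A - moment 1 u) (at u)"
      using has_real_derivative_moment[OF that, of 0] by (auto intro!: derivative_eq_intros)
    then show ?thesis
      by (rule has_field_derivative_transform_within_open[where S = "{..<d}"]) (use that g_eq in auto)
  qed
  have "((\<lambda>u. A - moment 1 u) has_real_derivative - moment 2 t) (at t)"
    using has_real_derivative_moment[OF assms(2), of 1]
    by (auto intro!: derivative_eq_intros simp: numeral_2_eq_2)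
  moreover have "\<bar>- moment 2 t\<bar> \<le> exp s * (\<integral>y. y\<^sup>2 * exp (b * y) \<partial>Mf f)"
    using moment_nonneg moment_le[OF \<open>t < d\<close>] by simp
  moreover have "u < d" if "\<bar>u - t\<bar> < d - t" for u
    using that by (simp add: abs_less_iff)
  ultimately show ?thesis
    using assms g_eq g_deriv
    by (intro exI[of _ "d - t"] exI[of _ "\<lambda>u. A - moment 1 u"] exI[of _ "- moment 2 t"] conjI allI impI)
      (auto intro: has_field_derivative_at_within)
qed

end

lemma V_ray_le_affine:
  assumes "0 \<le> \<tau>" "0 \<le> y" "m \<le> b" "r < t + (b - m)"
    and "\<theta> y + t * V \<tau> y \<le> s + m * y"
  shows "\<theta> y + r * V \<tau> y \<le> s + b * y"
proof -
  have "r * V \<tau> y \<le> t * V \<tau> y + (b * y - m * y)"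
  proof (cases "r \<le> t")
    case True
    then show ?thesis
      using assms(2,3) by (smt (verit) V_nonneg mult_right_mono)
  next
    case False
    then have "(r - t) * V \<tau> y \<le> (b - m) * y"
      using assms(1,2,4) by (intro mult_mono) (auto simp: V_nonneg V_le_self)
    then show ?thesis
      by (simp add: algebra_simps)
  qed
  then show ?thesis
    using assms(5) by linarith
qed

lemma Theta_ray_second_derivative_bounded:
  fixes \<theta> :: "real \<Rightarrow> real"
  assumes fin: "\<forall>l<\<beta>. (\<integral>\<^sup>+x. ennreal (exp (l * x)) \<partial>Mf f) < \<infinity>"
    and "m < \<beta>" "\<theta> \<in> Theta" "0 \<le> \<tau>" "0 \<le> t"
    and bound: "\<And>y. 0 \<le> y \<Longrightarrow> \<theta> y + t * V \<tau> y \<le> s + m * y"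
  shows "\<exists>\<delta>>0. \<exists>g1 g2.
           (\<forall>u\<ge>0. \<bar>u - t\<bar> < \<delta> \<longrightarrow>
              Lfun f xs (\<lambda>x. \<theta> x + u * V \<tau> x) - Lfun f xs \<theta> \<noteq> -\<infinity> \<and>
              ((\<lambda>r. real_of_ereal (Lfun f xs (\<lambda>x. \<theta> x + r * V \<tau> x) - Lfun f xs \<theta>))
                 has_real_derivative g1 u) (at u within {0..})) \<and>
           (g1 has_real_derivative g2) (at t within {0..}) \<and>
           \<bar>g2\<bar> \<le> exp s * (\<integral>y. y\<^sup>2 * exp ((m + \<beta>) / 2 * y) \<partial>Mf f)"
proof -
  define b where "b = (m + \<beta>) / 2"
  define d where "d = t + (b - m)"
  have "b < \<beta>" "m \<le> b" "t < d" "0 < d"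
    using assms by (simp_all add: b_def d_def field_simps)
  have "exp_dominated_ray f \<beta> b d s \<theta> (V \<tau>)"
  proof
    show "\<theta> \<in> borel_measurable (Mf f)"
      using \<open>\<theta> \<in> Theta\<close> by (intro mono_on_borel_measurable_Mf) (simp add: Theta_def)
    show "V \<tau> \<in> borel_measurable (Mf f)"
      by (intro borel_measurable_Mf) (simp add: V_def[abs_def])
    show "\<theta> y + r * V \<tau> y \<le> s + b * y" if "0 \<le> y" "r < d" for y r
      by (rule V_ray_le_affine[where m = m and t = t])
        (use that \<open>0 \<le> \<tau>\<close> \<open>m \<le> b\<close> bound in \<open>auto simp: d_def\<close>)
  qed (use fin \<open>b < \<beta>\<close> \<open>0 \<le> \<tau>\<close> V_nonneg V_le_self in simp_all)
  from exp_dominated_ray.ray_second_derivative_bounded[OF this \<open>0 < d\<close> \<open>t < d\<close>]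
  show ?thesis
    unfolding b_def .
qed

theorem mainTheorem6:
  fixes f :: "real \<Rightarrow> real" and \<beta> :: real and xs :: "real list"
  assumes f_nonneg: "\<forall>x\<ge>0. f x \<ge> 0"
    and f_prob: "(\<integral>\<^sup>+ x. ennreal (f x) \<partial>(restrict_space lborel {0..})) = 1"
    and A1_cont: "continuous_on {0..} f"
    and A1_pos: "\<forall>x>0. f x > 0"
    and A2_fin: "\<forall>l. (\<integral>\<^sup>+ x. ennreal (exp (l * x)) \<partial>(Mf f)) < \<infinity> \<longleftrightarrow> l < \<beta>"
    and A2_lim: "((\<lambda>l. \<integral>\<^sup>+ x. ennreal (exp (l * x)) \<partial>(Mf f)) \<longlongrightarrow> \<infinity>) (at_left \<beta>)"
    and A3: "\<forall>l. (\<integral>\<^sup>+ x. ennreal (exp (l * x)) \<partial>(Mf f)) < \<infinity> \<longrightarrow>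
                 (\<integral>\<^sup>+ x. ennreal (x\<^sup>2 * exp (l * x)) \<partial>(Mf f)) < \<infinity>"
    and data_ne: "xs \<noteq> []"
    and data_sorted: "sorted xs"
    and data_nonneg: "\<forall>x\<in>set xs. 0 \<le> x"
  shows "\<exists>C :: real \<Rightarrow> real \<Rightarrow> real. \<forall>\<epsilon> R s m.
     \<epsilon> > 0 \<and> s \<ge> 0 \<and> m < \<beta> \<and>
     (\<forall>\<phi>\<in>Theta. ereal R \<le> Lfun f xs \<phi> \<longrightarrow>
         \<bar>\<phi> 0\<bar> \<le> s \<and> (\<forall>x\<ge>0. right_deriv \<phi> x \<le> m))
     \<longrightarrow>
     (\<forall>\<theta>\<in>Theta. \<forall>\<tau>\<ge>0.
        (\<exists>D. has_DL f xs \<theta> (V \<tau>) D \<and> D > ereal \<epsilon>) \<and> ereal R \<le> Lfun f xs \<theta>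
        \<longrightarrow>
        (let g = (\<lambda>t. Lfun f xs (\<lambda>x. \<theta> x + t * V \<tau> x) - Lfun f xs \<theta>) in
         \<forall>t\<ge>0. g t \<ge> 0 \<longrightarrow>
           (\<exists>\<delta>>0. \<exists>g1 :: real \<Rightarrow> real. \<exists>g2 :: real.
              (\<forall>u\<ge>0. \<bar>u - t\<bar> < \<delta> \<longrightarrow>
                  g u \<noteq> -\<infinity> \<and>
                  ((\<lambda>r. real_of_ereal (g r)) has_real_derivative g1 u) (at u within {0..})) \<and>
              (g1 has_real_derivative g2) (at t within {0..}) \<and>
              \<bar>g2\<bar> \<le> C s m)))"
proof -
  define C where "C s m = exp s * (\<integral>y. y\<^sup>2 * exp ((m + \<beta>) / 2 * y) \<partial>Mf f)" for s m
  have fin: "\<forall>l<\<beta>. (\<integral>\<^sup>+x. ennreal (exp (l * x)) \<partial>Mf f) < \<infinity>"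
    using A2_fin by blast
  show ?thesis
    unfolding Let_def
  proof (intro exI[of _ C] allI impI ballI, goal_cases)
    case (1 \<epsilon> R s m \<theta> \<tau> t)
    then have bounds_of_L: "\<And>\<phi>. \<phi> \<in> Theta \<Longrightarrow> ereal R \<le> Lfun f xs \<phi> \<Longrightarrow>
                              \<bar>\<phi> 0\<bar> \<le> s \<and> (\<forall>x\<ge>0. right_deriv \<phi> x \<le> m)"
      and "m < \<beta>" "\<theta> \<in> Theta" "0 \<le> \<tau>" "0 \<le> t" "ereal R \<le> Lfun f xs \<theta>"
      and g_nonneg: "0 \<le> Lfun f xs (\<lambda>x. \<theta> x + t * V \<tau> x) - Lfun f xs \<theta>"
      by auto
    define \<phi> where "\<phi> = (\<lambda>x. \<theta> x + t * V \<tau> x)"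
    have "\<phi> \<in> Theta"
      unfolding \<phi>_def using \<open>\<theta> \<in> Theta\<close> \<open>0 \<le> t\<close> by (rule Theta_add_V)
    have "ereal R \<le> Lfun f xs \<phi>"
      using \<open>ereal R \<le> Lfun f xs \<theta>\<close> g_nonneg unfolding \<phi>_def by (rule Lfun_ge_of_diff_nonneg)
    with \<open>\<phi> \<in> Theta\<close> have "\<phi> 0 \<le> s" "\<And>x. 0 \<le> x \<Longrightarrow> right_deriv \<phi> x \<le> m"
      using bounds_of_L abs_le_D1 by blast+
    with \<open>\<phi> \<in> Theta\<close> have "\<theta> y + t * V \<tau> y \<le> s + m * y" if "0 \<le> y" for y
      using convex_le_affine_of_right_deriv_le[of \<phi> s m y] that by (simp add: Theta_def \<phi>_def)
    then show ?case
      unfolding C_def by (rule Theta_ray_second_derivative_bounded[OF fin \<open>m < \<beta>\<close> \<open>\<theta> \<in> Theta\<close> \<open>0 \<le> \<tau>\<close> \<open>0 \<le> t\<close>])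
  qed
qed

end
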